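(* Let $T$ be a tree with $n\geq 3$ vertices and maximum degree $\Delta$, and let $\delta_1$ be the minimum degree among the non-pendant vertices of $T$. Suppose that $m_{1,b}(T)=0$ for all $b\geq 4$ and that $\Delta-\delta_1\leq (2\delta_1-1)^{2}$. Then $GA(T)>ABC(T)$.
   Context: A vertex is pendant if it has degree $1$. $m_{a,b}(T)$ denotes the number of edges of $T$ joining a vertex of degree $a$ to a vertex of degree $b$. With $d_i$ the degree of vertex $v_i$, $GA(T)=\sum_{v_iv_j\in E(T)}\frac{2\sqrt{d_id_j}}{d_i+d_j}$ and $ABC(T)=\sum_{v_iv_j\in E(T)}\sqrt{\frac{d_i+d_j-2}{d_id_j}}$. *)

theory Defs
  imports Complex_Main
begin

definition adj :: "'a set set \<Rightarrow> ('a \<times> 'a) set" where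
  "adj E = {(u, v). {u, v} \<in> E}"

definition is_tree :: "'a set \<Rightarrow> 'a set set \<Rightarrow> bool" where
  "is_tree V E \<longleftrightarrow> finite V \<and> V \<noteq> {} \<and>
     (\<forall>e\<in>E. \<exists>u v. e = {u, v} \<and> u \<noteq> v \<and> u \<in> V \<and> v \<in> V) \<and>
     (\<forall>u\<in>V. \<forall>v\<in>V. (u, v) \<in> (adj E)\<^sup>*) \<and>
     card E = card V - 1"

definition deg :: "'a set set \<Rightarrow> 'a \<Rightarrow> nat" where
  "deg E v = card {e \<in> E. v \<in> e}"

definition max_degree :: "'a set \<Rightarrow> 'a set set \<Rightarrow> nat" where
  "max_degree V E = Max (deg E ` V)"

definition min_nonpendant_degree :: "'a set \<Rightarrow> 'a set set \<Rightarrow> nat" where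
  "min_nonpendant_degree V E = Min {deg E v | v. v \<in> V \<and> deg E v \<noteq> 1}"

definition m_edges :: "'a set set \<Rightarrow> nat \<Rightarrow> nat \<Rightarrow> nat" where
  "m_edges E a b = card {e \<in> E. \<exists>u v. e = {u, v} \<and> u \<noteq> v \<and> deg E u = a \<and> deg E v = b}"

definition GA :: "'a set set \<Rightarrow> real" where
  "GA E = (\<Sum>e\<in>E. 2 * sqrt (\<Prod>v\<in>e. real (deg E v)) / (\<Sum>v\<in>e. real (deg E v)))"

definition ABC :: "'a set set \<Rightarrow> real" where
  "ABC E = (\<Sum>e\<in>E. sqrt (((\<Sum>v\<in>e. real (deg E v)) - 2) / (\<Prod>v\<in>e. real (deg E v))))"

end

theory Submission
  imports Defs
begin

text \<open>The inequality is proved edge by edge. For an edge with end-degrees \<open>a, b\<close>, the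
  ABC-summand is smaller than the GA-summand iff \<open>(a + b - 2)(a + b)\<^sup>2 < 4a\<^sup>2b\<^sup>2\<close>.
  An edge between two leaves would make \<open>T\<close> a single edge, and a leaf is adjacent only to
  vertices of degree 2 or 3 by the hypothesis on \<open>m\<^sub>1\<^sub>,\<^sub>b\<close>; both cases are checked directly.
  For an edge between non-pendant vertices with \<open>2 \<le> a \<le> b\<close> we have
  \<open>b - a \<le> \<Delta> - \<delta>\<^sub>1 \<le> (2\<delta>\<^sub>1 - 1)\<^sup>2 \<le> (2a - 1)\<^sup>2\<close>, and under this bound
  \<open>4a\<^sup>2b\<^sup>2 - (a + b - 2)(a + b)\<^sup>2\<close> is a sum of non-negative terms and a positive one.\<close>

lemma degree_pair_poly_ineq:
  fixes a b :: "'a :: linordered_idom"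
  assumes "2 \<le> a" "a \<le> b" "b - a \<le> (2 * a - 1)\<^sup>2"
  shows "(a + b - 2) * (a + b)\<^sup>2 < 4 * a\<^sup>2 * b\<^sup>2"
proof -
  define d where "d = b - a"
  define D where "D = (2 * a - 1)\<^sup>2"
  have b: "b = a + d" by (simp add: d_def)
  have d: "0 \<le> d" and dD: "0 \<le> D - d" using assms by (auto simp: d_def D_def)
  have "4 * a\<^sup>2 * b\<^sup>2 - (a + b - 2) * (a + b)\<^sup>2
      = d\<^sup>2 * (D - d) + (2 * a - 1) * d * (D - d) + (2 * a + 1) * d + 4 * a\<^sup>2 * ((a - 1)\<^sup>2 + 1)"
    unfolding b D_def by (simp add: algebra_simps power2_eq_square power3_eq_cube)
  moreover have "0 \<le> d\<^sup>2 * (D - d)" using dD by simp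
  moreover have "0 \<le> (2 * a - 1) * d * (D - d)" using d dD assms by simp
  moreover have "0 \<le> (2 * a + 1) * d" using d assms by simp
  moreover have "0 < 4 * a\<^sup>2 * ((a - 1)\<^sup>2 + 1)" using assms by (simp add: add_pos_nonneg)
  ultimately show ?thesis by (simp add: algebra_simps)
qed

lemma degree_pair_poly_ineq_between:
  fixes a b \<delta> \<Delta> :: "'a :: linordered_idom"
  assumes "2 \<le> a" "2 \<le> b" "0 \<le> \<delta>" "\<delta> \<le> a" "\<delta> \<le> b" "a \<le> \<Delta>" "b \<le> \<Delta>"
    and "\<Delta> - \<delta> \<le> (2 * \<delta> - 1)\<^sup>2"
  shows "(a + b - 2) * (a + b)\<^sup>2 < 4 * a\<^sup>2 * b\<^sup>2"
proof -
  have "(2 * \<delta> - 1)\<^sup>2 \<le> (2 * x - 1)\<^sup>2" if "\<delta> \<le> x" "2 \<le> x" for x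
  proof -
    have "(2 * x - 1)\<^sup>2 - (2 * \<delta> - 1)\<^sup>2 = (2 * x - 2 * \<delta>) * (2 * x + 2 * \<delta> - 2)"
      by (simp add: algebra_simps power2_eq_square)
    moreover have "0 \<le> (2 * x - 2 * \<delta>) * (2 * x + 2 * \<delta> - 2)" using assms that by simp
    ultimately show ?thesis by simp
  qed
  from this[of a] this[of b] have gaps: "b - a \<le> (2 * a - 1)\<^sup>2" "a - b \<le> (2 * b - 1)\<^sup>2"
    using assms by auto
  show ?thesis
  proof (cases "a \<le> b")
    case True
    then show ?thesis using degree_pair_poly_ineq[of a b] gaps assms by simp
  next
    case False
    then have "(b + a - 2) * (b + a)\<^sup>2 < 4 * b\<^sup>2 * a\<^sup>2"
      using degree_pair_poly_ineq[of b a] gaps assms by simp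
    then show ?thesis by (simp add: algebra_simps)
  qed
qed

lemma ABC_term_less_GA_term:
  fixes a b :: real
  assumes "0 < a" "0 < b" "(a + b - 2) * (a + b)\<^sup>2 < 4 * a\<^sup>2 * b\<^sup>2"
  shows "sqrt ((a + b - 2) / (a * b)) < 2 * sqrt (a * b) / (a + b)"
proof -
  have ab: "0 < a * b" and sq: "0 < (a + b)\<^sup>2" using assms by auto
  have "(a + b - 2) * (a + b)\<^sup>2 < 4 * (a * b) * (a * b)"
    using assms(3) by (simp add: power2_eq_square mult_ac)
  then have "(a + b - 2) / (a * b) < 4 * (a * b) / (a + b)\<^sup>2"
    unfolding pos_divide_less_eq[OF ab] times_divide_eq_left pos_less_divide_eq[OF sq] .
  then have "sqrt ((a + b - 2) / (a * b)) < sqrt (4 * (a * b) / (a + b)\<^sup>2)"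
    by (rule real_sqrt_less_mono)
  also have "\<dots> = 2 * sqrt (a * b) / (a + b)"
    using assms by (simp add: real_sqrt_divide real_sqrt_mult)
  finally show ?thesis .
qed

lemma tree_finite_edges:
  assumes "is_tree V E"
  shows "finite E"
proof (rule finite_subset)
  have "\<forall>e\<in>E. \<exists>u v. e = {u, v} \<and> u \<noteq> v \<and> u \<in> V \<and> v \<in> V"
    using assms by (simp add: is_tree_def)
  then show "E \<subseteq> Pow V" by fastforce
  show "finite (Pow V)" using assms by (simp add: is_tree_def)
qed

lemma deg_ge_1_if_in_edge:
  assumes "finite E" "e \<in> E" "v \<in> e"
  shows "1 \<le> deg E v"
  using assms by (auto simp: deg_def Suc_le_eq card_gt_0_iff)

text \<open>Walking from \<open>u\<close> along edges never leaves \<open>{u, v}\<close>, since the only edge at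
  either end is \<open>{u, v}\<close> itself.\<close>
lemma tree_leaf_edge_covers_vertices:
  assumes T: "is_tree V E" and e: "{u, v} \<in> E" and u: "u \<in> V"
    and leaves: "deg E u = 1" "deg E v = 1"
  shows "V \<subseteq> {u, v}"
proof
  fix w assume "w \<in> V"
  then have "(u, w) \<in> (adj E)\<^sup>*" using T u unfolding is_tree_def by blast
  then show "w \<in> {u, v}"
  proof (induction rule: rtrancl_induct)
    case (step y z)
    have "{y, z} \<in> {e' \<in> E. y \<in> e'}" "{u, v} \<in> {e' \<in> E. y \<in> e'}"
      using step e by (auto simp: adj_def)
    moreover have "card {e' \<in> E. y \<in> e'} = 1" using step leaves by (auto simp: deg_def)
    ultimately have "{y, z} = {u, v}" by (metis card_1_singletonE singletonD)
    then show ?case by auto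
  qed simp
qed

lemma tree_no_edge_between_leaves:
  assumes "is_tree V E" "card V \<ge> 3" "{u, v} \<in> E" "u \<in> V"
  shows "\<not> (deg E u = 1 \<and> deg E v = 1)"
proof
  assume "deg E u = 1 \<and> deg E v = 1"
  then have "V \<subseteq> {u, v}" using tree_leaf_edge_covers_vertices[OF assms(1,3,4)] by simp
  then have "card V \<le> card {u, v}" by (simp add: card_mono)
  also have "\<dots> \<le> 2" by (simp add: card_insert_le_m1)
  finally show False using assms(2) by simp
qed

lemma m_edges_pos:
  assumes "finite E" "{u, v} \<in> E" "u \<noteq> v"
  shows "0 < m_edges E (deg E u) (deg E v)"
proof -
  let ?S = "{e \<in> E. \<exists>x y. e = {x, y} \<and> x \<noteq> y \<and> deg E x = deg E u \<and> deg E y = deg E v}"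
  have "{u, v} \<in> ?S" using assms by blast
  moreover have "finite ?S" using assms by simp
  ultimately show ?thesis unfolding m_edges_def by (simp add: card_gt_0_iff) blast
qed

lemma leaf_neighbour_deg_le_3:
  assumes "finite E" "\<forall>b\<ge>4. m_edges E 1 b = 0"
    and "{x, y} \<in> E" "x \<noteq> y" "deg E x = 1"
  shows "deg E y \<le> 3"
proof (rule ccontr)
  assume "\<not> deg E y \<le> 3"
  then have "m_edges E 1 (deg E y) = 0" using assms(2) by simp
  with m_edges_pos[OF assms(1,3,4)] assms(5) show False by simp
qed

lemma min_nonpendant_degree_le:
  assumes "finite V" "v \<in> V" "deg E v \<noteq> 1"
  shows "min_nonpendant_degree V E \<le> deg E v"
  unfolding min_nonpendant_degree_def
proof (rule Min_le)
  show "finite {deg E v |v. v \<in> V \<and> deg E v \<noteq> 1}"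
    using \<open>finite V\<close> by (rule finite_subset[rotated, OF finite_imageI]) blast
qed (use assms in blast)

lemma deg_le_max_degree:
  assumes "finite V" "v \<in> V"
  shows "deg E v \<le> max_degree V E"
  using assms by (simp add: max_degree_def)

lemma tree_edge_degree_ineq:
  fixes V :: "'a set" and E :: "'a set set"
  assumes T: "is_tree V E" and "card V \<ge> 3"
    and m1: "\<forall>b\<ge>4. m_edges E 1 b = 0"
    and \<Delta>\<delta>: "int (max_degree V E) - int (min_nonpendant_degree V E)
           \<le> (2 * int (min_nonpendant_degree V E) - 1)\<^sup>2"
    and e: "{u, v} \<in> E" "u \<noteq> v" "u \<in> V" "v \<in> V"
  defines "a \<equiv> real (deg E u)" and "b \<equiv> real (deg E v)"
  shows "(a + b - 2) * (a + b)\<^sup>2 < 4 * a\<^sup>2 * b\<^sup>2"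
proof -
  have finE: "finite E" using T by (rule tree_finite_edges)
  have finV: "finite V" using T unfolding is_tree_def by blast
  have "1 \<le> deg E u" "1 \<le> deg E v" using deg_ge_1_if_in_edge[OF finE e(1)] by auto
  have "\<not> (deg E u = 1 \<and> deg E v = 1)"
    using tree_no_edge_between_leaves[OF T \<open>card V \<ge> 3\<close> e(1,3)] .
  moreover have "deg E v \<le> 3" if "deg E u = 1"
    using leaf_neighbour_deg_le_3[OF finE m1] that e by blast
  moreover have "deg E u \<le> 3" if "deg E v = 1"
    using leaf_neighbour_deg_le_3[OF finE m1, of v u] that e by (simp add: insert_commute)
  ultimately consider "deg E u = 1" "deg E v \<in> {2, 3}" | "deg E v = 1" "deg E u \<in> {2, 3}"
    | "deg E u \<noteq> 1" "deg E v \<noteq> 1"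
    using \<open>1 \<le> deg E u\<close> \<open>1 \<le> deg E v\<close> by fastforce
  then show ?thesis
  proof cases
    case 1
    then have "a = 1" "b = 2 \<or> b = 3" by (auto simp: a_def b_def)
    then show ?thesis by auto
  next
    case 2
    then have "b = 1" "a = 2 \<or> a = 3" by (auto simp: a_def b_def)
    then show ?thesis by auto
  next
    case 3
    let ?\<delta> = "real (min_nonpendant_degree V E)" and ?\<Delta> = "real (max_degree V E)"
    have "real_of_int (int (max_degree V E) - int (min_nonpendant_degree V E))
        \<le> real_of_int ((2 * int (min_nonpendant_degree V E) - 1)\<^sup>2)"
      using \<Delta>\<delta> by linarith
    then have "?\<Delta> - ?\<delta> \<le> (2 * ?\<delta> - 1)\<^sup>2" by simp
    moreover have "?\<delta> \<le> a" "?\<delta> \<le> b"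
      using min_nonpendant_degree_le[OF finV] e 3 by (auto simp: a_def b_def)
    moreover have "a \<le> ?\<Delta>" "b \<le> ?\<Delta>"
      using deg_le_max_degree[OF finV] e by (auto simp: a_def b_def)
    moreover have "2 \<le> a" "2 \<le> b"
      using 3 \<open>1 \<le> deg E u\<close> \<open>1 \<le> deg E v\<close> by (auto simp: a_def b_def)
    ultimately show ?thesis by (intro degree_pair_poly_ineq_between) auto
  qed
qed

theorem theorem3p8:
  fixes V :: "'a set" and E :: "'a set set"
  assumes "is_tree V E"
    and "card V \<ge> 3"
    and "\<forall>b\<ge>4. m_edges E 1 b = 0"
    and "int (max_degree V E) - int (min_nonpendant_degree V E)
           \<le> (2 * int (min_nonpendant_degree V E) - 1)\<^sup>2"
  shows "GA E > ABC E"
  unfolding GA_def ABC_def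
proof (rule sum_strict_mono)
  show "finite E" using assms(1) by (rule tree_finite_edges)
  show "E \<noteq> {}" using assms(1,2) unfolding is_tree_def by auto
next
  fix e assume "e \<in> E"
  then obtain u v where e: "e = {u, v}" "u \<noteq> v" "u \<in> V" "v \<in> V"
    using assms(1) unfolding is_tree_def by blast
  have "1 \<le> deg E u" "1 \<le> deg E v"
    using deg_ge_1_if_in_edge[OF tree_finite_edges[OF assms(1)] \<open>e \<in> E\<close>] e by auto
  then have "sqrt ((real (deg E u) + real (deg E v) - 2) / (real (deg E u) * real (deg E v)))
      < 2 * sqrt (real (deg E u) * real (deg E v)) / (real (deg E u) + real (deg E v))"
    using tree_edge_degree_ineq[OF assms] \<open>e \<in> E\<close> e
    by (intro ABC_term_less_GA_term) auto
  then show "sqrt (((\<Sum>v\<in>e. real (deg E v)) - 2) / (\<Prod>v\<in>e. real (deg E v)))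
        < 2 * sqrt (\<Prod>v\<in>e. real (deg E v)) / (\<Sum>v\<in>e. real (deg E v))"
    using e by simp
qed

end
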